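(* Let $d\in\mathbb{N}$. If a linear functional $L:\mathbb{R}[\underline x]_{2d}\to\mathbb{R}$ satisfies $L(p^2)>0$ for all $p\in\mathbb{R}[\underline x]_d\setminus\{0\}$, then $L$ extends to a linear functional $\widetilde L:\mathbb{R}[\underline x]\to\mathbb{R}$ satisfying $\widetilde L(p^2)>0$ for all $p\in\mathbb{R}[\underline x]\setminus\{0\}$.
   Context: $\mathbb{R}[\underline x]=\mathbb{R}[x_1,\dots,x_n]$, and $\mathbb{R}[\underline x]_k$ denotes the subspace of polynomials of degree at most $k$. *)

theory Defs
  imports "HOL-Analysis.Analysis" "HOL-Library.Poly_Mapping"
begin

text \<open>Real polynomials in the variables indexed by a finite type 'v
  (so n = CARD('v) variables): finitely supported maps from monomials
  (exponent vectors) to real coefficients.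
  Multiplication is the convolution product from Poly_Mapping.\<close>

type_synonym 'v rpoly = "('v \<Rightarrow>\<^sub>0 nat) \<Rightarrow>\<^sub>0 real"

definition mon_deg :: "('v \<Rightarrow>\<^sub>0 nat) \<Rightarrow> nat" where
  "mon_deg m = (\<Sum>i\<in>Poly_Mapping.keys m. Poly_Mapping.lookup m i)"

definition deg_le :: "nat \<Rightarrow> 'v rpoly \<Rightarrow> bool" where
  "deg_le k p \<longleftrightarrow> (\<forall>m\<in>Poly_Mapping.keys p. mon_deg m \<le> k)"

definition pscale :: "real \<Rightarrow> 'v rpoly \<Rightarrow> 'v rpoly" where
  "pscale c p = Poly_Mapping.map (\<lambda>a. c * a) p"

definition linear_on_deg :: "nat \<Rightarrow> ('v rpoly \<Rightarrow> real) \<Rightarrow> bool" where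
  "linear_on_deg k L \<longleftrightarrow>
     (\<forall>p q. deg_le k p \<longrightarrow> deg_le k q \<longrightarrow> L (p + q) = L p + L q) \<and>
     (\<forall>c p. deg_le k p \<longrightarrow> L (pscale c p) = c * L p)"

definition linear_poly_fun :: "('v rpoly \<Rightarrow> real) \<Rightarrow> bool" where
  "linear_poly_fun L \<longleftrightarrow>
     (\<forall>p q. L (p + q) = L p + L q) \<and> (\<forall>c p. L (pscale c p) = c * L p)"

end

theory Submission
  imports Defs
begin

text \<open>Write \<open>M m = L (x\<^sup>m)\<close>. Positivity of \<open>L (p\<^sup>2)\<close> on polynomials of degree at most \<open>K\<close>
  says that the Hankel form \<open>(a, b) \<mapsto> M (a + b)\<close> on the monomials of degree at most \<open>K\<close> is
  positive definite, hence coercive, since the index set is finite. To pass from \<open>K\<close> to \<open>K + 1\<close>,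
  keep the moments of degree at most \<open>2K + 1\<close> and give every monomial \<open>m\<close> of higher degree the
  moment \<open>\<sigma> ^ |m|\<^sup>2\<close>, where \<open>|m|\<^sup>2\<close> is the sum of the squared exponents. Because
  \<open>|b + c|\<^sup>2 < 2|b|\<^sup>2 + 2|c|\<^sup>2\<close> for \<open>b \<noteq> c\<close>, the Hankel block of the monomials of degree
  \<open>K + 1\<close> is then diagonally dominant with diagonal at least \<open>\<sigma>\<close>, so for large \<open>\<sigma>\<close> it absorbs
  the mixed block, whose entries do not depend on \<open>\<sigma>\<close>. Iterating, every moment is eventually
  fixed, and the limiting moment sequence defines the extension.\<close>

section \<open>Quadratic forms on finite index sets\<close>

definition quad_form :: "('a \<Rightarrow> 'a \<Rightarrow> real) \<Rightarrow> 'a set \<Rightarrow> ('a \<Rightarrow> real) \<Rightarrow> real" where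
  "quad_form G S u = (\<Sum>a\<in>S. \<Sum>b\<in>S. u a * u b * G a b)"

definition sumsq :: "'a set \<Rightarrow> ('a \<Rightarrow> real) \<Rightarrow> real" where
  "sumsq S u = (\<Sum>a\<in>S. (u a)\<^sup>2)"

definition pos_def_on :: "('a \<Rightarrow> 'a \<Rightarrow> real) \<Rightarrow> 'a set \<Rightarrow> bool" where
  "pos_def_on G S \<longleftrightarrow> (\<forall>u. (\<exists>a\<in>S. u a \<noteq> 0) \<longrightarrow> quad_form G S u > 0)"

lemma sumsq_nonneg: "sumsq S u \<ge> 0"
  unfolding sumsq_def by (simp add: sum_nonneg)

lemma sumsq_pos: "finite S \<Longrightarrow> a \<in> S \<Longrightarrow> u a \<noteq> 0 \<Longrightarrow> sumsq S u > 0"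
  unfolding sumsq_def by (rule sum_pos2) auto

lemma sq_le_sumsq: "finite S \<Longrightarrow> a \<in> S \<Longrightarrow> (u a)\<^sup>2 \<le> sumsq S u"
  unfolding sumsq_def by (rule member_le_sum) auto

lemma quad_form_cong:
  "(\<And>a b. a \<in> S \<Longrightarrow> b \<in> S \<Longrightarrow> G a b = H a b) \<Longrightarrow> (\<And>a. a \<in> S \<Longrightarrow> u a = v a) \<Longrightarrow>
    quad_form G S u = quad_form H S v"
  unfolding quad_form_def by (auto intro!: sum.cong)

lemma coercive_imp_pos_def_on:
  assumes "finite S" "\<alpha> > 0" "\<And>u. \<alpha> * sumsq S u \<le> quad_form G S u"
  shows "pos_def_on G S"
  unfolding pos_def_on_def
  using assms sumsq_pos by (metis mult_pos_pos order_less_le_trans)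

lemma quad_form_insert:
  assumes "finite S" "s \<notin> S" "\<And>a b. G a b = G b a"
  shows "quad_form G (insert s S) u =
    (u s)\<^sup>2 * G s s + 2 * u s * (\<Sum>b\<in>S. G s b * u b) + quad_form G S u"
proof -
  have "quad_form G (insert s S) u = (u s)\<^sup>2 * G s s + (\<Sum>b\<in>S. u s * u b * G s b)
      + (\<Sum>a\<in>S. u a * u s * G a s) + quad_form G S u"
    unfolding quad_form_def using assms by (simp add: sum.distrib power2_eq_square)
  also have "(\<Sum>a\<in>S. u a * u s * G a s) = (\<Sum>b\<in>S. u s * u b * G s b)"
    by (rule sum.cong) (auto simp: assms(3))
  also have "(\<Sum>b\<in>S. u s * u b * G s b) = u s * (\<Sum>b\<in>S. G s b * u b)"
    by (simp add: sum_distrib_left mult_ac)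
  finally show ?thesis by simp
qed

lemma quad_form_schur:
  assumes "\<And>a b. G a b = G b a"
  shows "quad_form (\<lambda>a b. G a b - G a s * G s b / g) S u =
    quad_form G S u - (\<Sum>b\<in>S. G s b * u b)\<^sup>2 / g"
proof -
  have "quad_form (\<lambda>a b. G a b - G a s * G s b / g) S u =
      quad_form G S u - (\<Sum>a\<in>S. \<Sum>b\<in>S. (u a * G a s) * (G s b * u b) / g)"
    unfolding quad_form_def by (simp add: right_diff_distrib sum_subtractf mult_ac)
  also have "(\<Sum>a\<in>S. \<Sum>b\<in>S. (u a * G a s) * (G s b * u b) / g) =
      (\<Sum>a\<in>S. u a * G a s) * (\<Sum>b\<in>S. G s b * u b) / g"
    by (simp add: sum_product sum_divide_distrib)
  also have "(\<Sum>a\<in>S. u a * G a s) = (\<Sum>b\<in>S. G s b * u b)"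
    using assms by (simp add: mult_ac)
  finally show ?thesis by (simp add: power2_eq_square)
qed

lemma quad_form_insert_complete_square:
  assumes "finite S" "s \<notin> S" "\<And>a b. G a b = G b a" "G s s \<noteq> 0"
  shows "quad_form G (insert s S) u =
    G s s * (u s + (\<Sum>b\<in>S. G s b * u b) / G s s)\<^sup>2 +
    quad_form (\<lambda>a b. G a b - G a s * G s b / G s s) S u"
proof -
  define l where "l = (\<Sum>b\<in>S. G s b * u b)"
  have "quad_form (\<lambda>a b. G a b - G a s * G s b / G s s) S u = quad_form G S u - l\<^sup>2 / G s s"
    unfolding l_def by (rule quad_form_schur[OF assms(3)])
  moreover have "G s s * (u s + l / G s s)\<^sup>2 = (u s)\<^sup>2 * G s s + 2 * u s * l + l\<^sup>2 / G s s"
    using assms(4) by (simp add: field_simps power2_eq_square)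
  ultimately show ?thesis
    unfolding quad_form_insert[OF assms(1-3)] l_def[symmetric] by simp
qed

lemma coercive_insert_schur:
  fixes G :: "'a \<Rightarrow> 'a \<Rightarrow> real"
  assumes "finite S" "s \<notin> S" "\<And>a b. G a b = G b a" "G s s > 0" "\<alpha> > 0"
    and schur: "\<And>u. \<alpha> * sumsq S u \<le> quad_form (\<lambda>a b. G a b - G a s * G s b / G s s) S u"
  shows "\<exists>\<beta>>0. \<forall>u. \<beta> * sumsq (insert s S) u \<le> quad_form G (insert s S) u"
proof -
  define g where "g = G s s"
  define C where "C = (\<Sum>b\<in>S. (G s b)\<^sup>2)"
  define K where "K = 2 * C / g\<^sup>2 + 1"
  define \<beta> where "\<beta> = min (g / 2) (\<alpha> / K)"
  have "g > 0" "C \<ge> 0" using assms(4) by (simp_all add: g_def C_def sum_nonneg)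
  then have "K \<ge> 1" by (simp add: K_def)
  have "\<beta> > 0" using \<open>g > 0\<close> \<open>K \<ge> 1\<close> \<open>\<alpha> > 0\<close> by (simp add: \<beta>_def)
  moreover have "\<beta> * sumsq (insert s S) u \<le> quad_form G (insert s S) u" for u
  proof -
    define l where "l = (\<Sum>b\<in>S. G s b * u b)"
    define y where "y = u s + l / g"
    define N where "N = sumsq S u"
    have "N \<ge> 0" by (simp add: N_def sumsq_nonneg)
    have "(l / g)\<^sup>2 \<le> C * N / g\<^sup>2"
      using Cauchy_Schwarz_ineq_sum[of "G s" u S] by (simp add: l_def C_def N_def sumsq_def
          power_divide divide_right_mono)
    moreover have "(u s)\<^sup>2 \<le> 2 * y\<^sup>2 + 2 * (l / g)\<^sup>2"
      using sum_squares_bound[of y "- (l / g)"] by (simp add: y_def power2_eq_square algebra_simps)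
    moreover have "K * N = 2 * (C * N / g\<^sup>2) + N"
      by (simp add: K_def field_simps)
    ultimately have "\<beta> * ((u s)\<^sup>2 + N) \<le> \<beta> * (2 * y\<^sup>2 + K * N)"
      using \<open>\<beta> > 0\<close> by (intro mult_left_mono) auto
    also have "\<dots> = (2 * \<beta>) * y\<^sup>2 + (\<beta> * K) * N"
      by (simp add: algebra_simps)
    also have "\<dots> \<le> g * y\<^sup>2 + \<alpha> * N"
    proof (intro add_mono mult_right_mono)
      show "2 * \<beta> \<le> g" "\<beta> * K \<le> \<alpha>"
        using \<open>K \<ge> 1\<close> by (auto simp: \<beta>_def min_def field_simps)
    qed (use \<open>N \<ge> 0\<close> in auto)
    also have "\<dots> \<le> quad_form G (insert s S) u"
      using schur[of u] \<open>g > 0\<close>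
      by (simp add: quad_form_insert_complete_square[OF assms(1-3)] y_def l_def N_def g_def)
    finally show ?thesis
      using assms(1,2) by (simp add: N_def sumsq_def)
  qed
  ultimately show ?thesis by blast
qed

lemma pos_def_on_diag_pos:
  assumes "finite S" "pos_def_on G S" "s \<in> S"
  shows "G s s > 0"
proof -
  define e where "e a = (if a = s then 1 else 0 :: real)" for a
  have "quad_form G S e > 0"
    using assms(2,3) unfolding pos_def_on_def by (auto simp: e_def)
  moreover have "quad_form G S e = G s s"
    using assms(1,3) by (simp add: quad_form_def e_def sum.remove)
  ultimately show ?thesis by simp
qed

lemma pos_def_on_schur_complement:
  assumes "finite S" "s \<notin> S" "\<And>a b. G a b = G b a" "pos_def_on G (insert s S)"
  shows "pos_def_on (\<lambda>a b. G a b - G a s * G s b / G s s) S"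
  unfolding pos_def_on_def
proof (intro allI impI)
  let ?G' = "\<lambda>a b. G a b - G a s * G s b / G s s"
  fix u :: "'a \<Rightarrow> real"
  assume "\<exists>a\<in>S. u a \<noteq> 0"
  \<comment> \<open>choosing \<open>v s\<close> to kill the square leaves exactly the Schur complement\<close>
  define v where "v = u(s := - (\<Sum>b\<in>S. G s b * u b) / G s s)"
  have v_S: "v b = u b" if "b \<in> S" for b
    using that assms(2) by (auto simp: v_def)
  obtain a where "a \<in> S" "u a \<noteq> 0"
    using \<open>\<exists>a\<in>S. u a \<noteq> 0\<close> by blast
  then have "quad_form G (insert s S) v > 0"
    using assms(4) v_S unfolding pos_def_on_def by (metis insertCI)
  moreover have "(\<Sum>b\<in>S. G s b * v b) = (\<Sum>b\<in>S. G s b * u b)"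
    by (rule sum.cong) (simp_all add: v_S)
  moreover have "quad_form ?G' S v = quad_form ?G' S u"
    by (rule quad_form_cong) (simp_all add: v_S)
  moreover have "G s s > 0"
    using pos_def_on_diag_pos[of "insert s S" G s] assms(1,4) by simp
  ultimately show "quad_form ?G' S u > 0"
    using quad_form_insert_complete_square[OF assms(1-3), where u = v] by (simp add: v_def)
qed

lemma pos_def_on_imp_coercive:
  assumes "finite S" "\<And>a b. G a b = G b a" "pos_def_on G S"
  shows "\<exists>\<alpha>>0. \<forall>u. \<alpha> * sumsq S u \<le> quad_form G S u"
  using assms
proof (induction S arbitrary: G rule: finite_induct)
  case empty
  then show ?case by (auto simp: quad_form_def sumsq_def intro: exI[of _ 1])
next
  case (insert s S G)
  let ?G' = "\<lambda>a b. G a b - G a s * G s b / G s s"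
  have "pos_def_on ?G' S"
    using pos_def_on_schur_complement[OF insert.hyps insert.prems] .
  then obtain \<alpha> where "\<alpha> > 0" "\<And>u. \<alpha> * sumsq S u \<le> quad_form ?G' S u"
    using insert.IH[of ?G'] insert.prems(1) by (auto simp: mult_ac)
  moreover have "G s s > 0"
    using pos_def_on_diag_pos[of "insert s S" G s] insert.hyps(1) insert.prems(2) by simp
  ultimately show ?case
    using coercive_insert_schur[where G = G, OF insert.hyps insert.prems(1)] by simp
qed

lemma quad_form_union:
  assumes "finite A" "finite C" "A \<inter> C = {}" "\<And>a c. P a c = P c a"
  shows "quad_form P (A \<union> C) u =
    quad_form P A u + 2 * (\<Sum>a\<in>A. \<Sum>c\<in>C. u a * u c * P a c) + quad_form P C u"
proof -
  have "quad_form P (A \<union> C) u = quad_form P A u + (\<Sum>a\<in>A. \<Sum>c\<in>C. u a * u c * P a c)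
      + (\<Sum>c\<in>C. \<Sum>a\<in>A. u c * u a * P c a) + quad_form P C u"
    unfolding quad_form_def using assms by (simp add: sum.union_disjoint sum.distrib)
  also have "(\<Sum>c\<in>C. \<Sum>a\<in>A. u c * u a * P c a) = (\<Sum>a\<in>A. \<Sum>c\<in>C. u a * u c * P a c)"
    by (subst sum.swap) (simp add: assms(4) mult_ac)
  finally show ?thesis by simp
qed

lemma cross_term_bound:
  assumes "finite A" "finite C" "e > 0"
  shows "2 * \<bar>\<Sum>a\<in>A. \<Sum>c\<in>C. u a * u c * P a c\<bar> \<le>
    (\<Sum>a\<in>A. \<Sum>c\<in>C. \<bar>P a c\<bar>) * (e * sumsq A u + sumsq C u / e)"
proof -
  have pair: "2 * \<bar>u a * u c * P a c\<bar> \<le> \<bar>P a c\<bar> * (e * sumsq A u + sumsq C u / e)"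
    if "a \<in> A" "c \<in> C" for a c
  proof -
    have "2 * (e * \<bar>u a\<bar>) * \<bar>u c\<bar> \<le> (e * \<bar>u a\<bar>)\<^sup>2 + \<bar>u c\<bar>\<^sup>2"
      by (rule sum_squares_bound)
    then have "2 * (\<bar>u a\<bar> * \<bar>u c\<bar>) \<le> e * (u a)\<^sup>2 + (u c)\<^sup>2 / e"
      using \<open>e > 0\<close> by (simp add: field_simps power2_eq_square)
    also have "\<dots> \<le> e * sumsq A u + sumsq C u / e"
      using that assms by (intro add_mono mult_left_mono divide_right_mono sq_le_sumsq) auto
    finally have "2 * (\<bar>u a\<bar> * \<bar>u c\<bar>) \<le> e * sumsq A u + sumsq C u / e" .
    from mult_left_mono[OF this abs_ge_zero[of "P a c"]] show ?thesis
      by (simp add: abs_mult mult_ac)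
  qed
  have "2 * \<bar>\<Sum>a\<in>A. \<Sum>c\<in>C. u a * u c * P a c\<bar> \<le> (\<Sum>a\<in>A. \<Sum>c\<in>C. 2 * \<bar>u a * u c * P a c\<bar>)"
    by (simp add: sum_distrib_left[symmetric] order_trans[OF sum_abs sum_mono[OF sum_abs]])
  also have "\<dots> \<le> (\<Sum>a\<in>A. \<Sum>c\<in>C. \<bar>P a c\<bar> * (e * sumsq A u + sumsq C u / e))"
    by (intro sum_mono pair)
  also have "\<dots> = (\<Sum>a\<in>A. \<Sum>c\<in>C. \<bar>P a c\<bar>) * (e * sumsq A u + sumsq C u / e)"
    by (simp add: sum_distrib_right)
  finally show ?thesis .
qed

lemma coercive_union:
  fixes P :: "'a \<Rightarrow> 'a \<Rightarrow> real" and A C :: "'a set"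
  defines "B \<equiv> \<Sum>a\<in>A. \<Sum>c\<in>C. \<bar>P a c\<bar>"
  assumes "finite A" "finite C" "A \<inter> C = {}" "\<And>a c. P a c = P c a" "\<alpha> > 0"
    and coercive_A: "\<And>u. \<alpha> * sumsq A u \<le> quad_form P A u"
    and coercive_C: "\<And>u. \<tau> * sumsq C u \<le> quad_form P C u"
    and large: "2 * (B + 1) * B / \<alpha> + \<alpha> / 2 \<le> \<tau>"
  shows "\<alpha> / 2 * sumsq (A \<union> C) u \<le> quad_form P (A \<union> C) u"
proof -
  define e where "e = \<alpha> / (2 * (B + 1))"
  have "B \<ge> 0" by (simp add: B_def sum_nonneg)
  then have "e > 0" "B * e \<le> \<alpha> / 2" "B / e = 2 * (B + 1) * B / \<alpha>"
    using \<open>\<alpha> > 0\<close> by (simp_all add: e_def field_simps)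
  have cross: "- (B * e * sumsq A u + B / e * sumsq C u) \<le> 2 * (\<Sum>a\<in>A. \<Sum>c\<in>C. u a * u c * P a c)"
    using cross_term_bound[OF assms(2,3) \<open>e > 0\<close>, of u P] by (simp add: B_def algebra_simps)
  have "B * e * sumsq A u \<le> \<alpha> / 2 * sumsq A u"
    using \<open>B * e \<le> \<alpha> / 2\<close> by (rule mult_right_mono[OF _ sumsq_nonneg])
  moreover have "B / e * sumsq C u \<le> (\<tau> - \<alpha> / 2) * sumsq C u"
    using \<open>B / e = _\<close> large by (intro mult_right_mono[OF _ sumsq_nonneg]) simp
  moreover have "sumsq (A \<union> C) u = sumsq A u + sumsq C u"
    using assms(2-4) by (simp add: sumsq_def sum.union_disjoint)
  ultimately show ?thesis
    using coercive_A[of u] coercive_C[of u] cross quad_form_union[OF assms(2-5)]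
    by (simp add: algebra_simps)
qed

lemma quad_form_diag_dominant:
  fixes \<sigma> :: real and w :: "'a \<Rightarrow> real"
  assumes "finite C" "\<sigma> > 0" "2 * card C \<le> \<sigma>"
    and diag: "\<And>b. b \<in> C \<Longrightarrow> P b b = (w b)\<^sup>2" "\<And>b. b \<in> C \<Longrightarrow> \<sigma> \<le> (w b)\<^sup>2"
    and off_diag: "\<And>b c. b \<in> C \<Longrightarrow> c \<in> C \<Longrightarrow> b \<noteq> c \<Longrightarrow> \<bar>P b c\<bar> \<le> \<bar>w b * w c\<bar> / \<sigma>"
  shows "\<sigma> / 2 * sumsq C u \<le> quad_form P C u"
proof -
  define X where "X b = \<bar>u b * w b\<bar>" for b
  define T where "T = (\<Sum>b\<in>C. (X b)\<^sup>2)"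
  have pair: "(if b = c then (X b)\<^sup>2 else 0) - ((X b)\<^sup>2 + (X c)\<^sup>2) / (2 * \<sigma>) \<le> u b * u c * P b c"
    if "b \<in> C" "c \<in> C" for b c
  proof (cases "b = c")
    case True
    have "u b * u c * P b c = (X b)\<^sup>2"
      using True that diag(1) by (simp add: X_def power_mult_distrib power2_eq_square)
    moreover have "0 \<le> ((X b)\<^sup>2 + (X c)\<^sup>2) / (2 * \<sigma>)"
      using \<open>\<sigma> > 0\<close> by simp
    ultimately show ?thesis using True by simp
  next
    case False
    have "- (u b * u c * P b c) \<le> \<bar>u b\<bar> * \<bar>u c\<bar> * \<bar>P b c\<bar>"
      by (simp add: abs_mult[symmetric])
    also have "\<dots> \<le> \<bar>u b\<bar> * \<bar>u c\<bar> * (\<bar>w b * w c\<bar> / \<sigma>)"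
      using off_diag[OF that False] by (intro mult_left_mono) auto
    also have "\<dots> = X b * X c / \<sigma>"
      by (simp add: X_def abs_mult)
    also have "\<dots> \<le> ((X b)\<^sup>2 + (X c)\<^sup>2) / (2 * \<sigma>)"
      using sum_squares_bound[of "X b" "X c"] \<open>\<sigma> > 0\<close> by (simp add: field_simps)
    finally show ?thesis using False by simp
  qed
  have "(\<Sum>b\<in>C. \<Sum>c\<in>C. (if b = c then (X b)\<^sup>2 else 0) - ((X b)\<^sup>2 + (X c)\<^sup>2) / (2 * \<sigma>))
      = T - card C * T / \<sigma>"
    using \<open>finite C\<close> \<open>\<sigma> > 0\<close>
    by (simp add: T_def sum_subtractf sum.distrib sum_divide_distrib[symmetric] sum_distrib_left[symmetric]
        field_simps)
  then have "T - card C * T / \<sigma> \<le> quad_form P C u"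
    unfolding quad_form_def by (metis (no_types, lifting) pair sum_mono)
  moreover have "T / 2 \<le> T - card C * T / \<sigma>"
  proof -
    have "(2 * card C) * T \<le> \<sigma> * T"
      using assms(3) by (intro mult_right_mono) (simp_all add: T_def sum_nonneg)
    then show ?thesis using \<open>\<sigma> > 0\<close> by (simp add: field_simps)
  qed
  moreover have "\<sigma> * sumsq C u \<le> T"
    unfolding T_def sumsq_def sum_distrib_left
    using diag(2) by (intro sum_mono) (simp add: X_def power_mult_distrib mult.commute[of "(u _)\<^sup>2"] mult_right_mono)
  ultimately show ?thesis by simp
qed

section \<open>Monomials, the Riesz functional and Hankel forms\<close>

lemma mon_deg_eq_sum:
  "finite S \<Longrightarrow> Poly_Mapping.keys m \<subseteq> S \<Longrightarrow> mon_deg m = (\<Sum>i\<in>S. Poly_Mapping.lookup m i)"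
  unfolding mon_deg_def by (rule sum.mono_neutral_left) (auto simp: in_keys_iff)

lemma mon_deg_add: "mon_deg (a + b) = mon_deg a + mon_deg b"
proof -
  let ?S = "Poly_Mapping.keys a \<union> Poly_Mapping.keys b"
  have "Poly_Mapping.keys (a + b) \<subseteq> ?S" by (rule keys_add)
  then show ?thesis by (simp add: mon_deg_eq_sum[of ?S] lookup_add sum.distrib)
qed

lemma mon_deg_zero: "mon_deg 0 = 0"
  by (simp add: mon_deg_def)

lemma lookup_le_mon_deg: "Poly_Mapping.lookup m i \<le> mon_deg m"
  unfolding mon_deg_def by (cases "i \<in> Poly_Mapping.keys m") (auto intro: member_le_sum simp: in_keys_iff)

definition mons_le :: "nat \<Rightarrow> ('v \<Rightarrow>\<^sub>0 nat) set" where
  "mons_le K = {m. mon_deg m \<le> K}"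

lemma finite_mons_le: "finite (mons_le K :: ('v::finite \<Rightarrow>\<^sub>0 nat) set)"
proof (rule finite_imageD)
  have "Poly_Mapping.lookup ` (mons_le K :: ('v \<Rightarrow>\<^sub>0 nat) set) \<subseteq> (\<Pi>\<^sub>E i\<in>UNIV. {..K})"
    unfolding mons_le_def using lookup_le_mon_deg order_trans by fastforce
  then show "finite (Poly_Mapping.lookup ` (mons_le K :: ('v \<Rightarrow>\<^sub>0 nat) set))"
    by (rule finite_subset) (simp add: finite_PiE)
  show "inj_on Poly_Mapping.lookup (mons_le K)"
    by (rule inj_onI) (metis poly_mapping_eqI)
qed

lemma deg_le_iff_keys_subset: "deg_le k p \<longleftrightarrow> Poly_Mapping.keys p \<subseteq> mons_le k"
  unfolding deg_le_def mons_le_def by auto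

lemma deg_le_mono: "deg_le j p \<Longrightarrow> j \<le> k \<Longrightarrow> deg_le k p"
  unfolding deg_le_def using order_trans by blast

lemma deg_le_exists: "\<exists>k. deg_le k p"
  unfolding deg_le_def
  by (rule exI[of _ "\<Sum>m\<in>Poly_Mapping.keys p. mon_deg m"]) (auto intro: member_le_sum)

lemma deg_le_mult:
  assumes "deg_le j p" "deg_le k q"
  shows "deg_le (j + k) (p * q)"
  unfolding deg_le_def
proof
  fix m assume "m \<in> Poly_Mapping.keys (p * q)"
  then obtain a b where "m = a + b" "a \<in> Poly_Mapping.keys p" "b \<in> Poly_Mapping.keys q"
    using keys_mult[of p q] by blast
  then show "mon_deg m \<le> j + k"
    using assms unfolding deg_le_def by (simp add: mon_deg_add add_mono)
qed

lemma deg_le_sum: "(\<And>i. i \<in> I \<Longrightarrow> deg_le k (f i)) \<Longrightarrow> deg_le k (\<Sum>i\<in>I. f i)"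
  unfolding deg_le_def using keys_sum[of f I] by blast

lemma lookup_pscale: "Poly_Mapping.lookup (pscale c p) m = c * Poly_Mapping.lookup p m"
  unfolding pscale_def by (simp add: map.rep_eq when_def)

lemma keys_pscale_subset: "Poly_Mapping.keys (pscale c p) \<subseteq> Poly_Mapping.keys p"
  by (auto simp: in_keys_iff lookup_pscale)

lemma pscale_single: "pscale c (Poly_Mapping.single m 1) = Poly_Mapping.single m c"
  by (rule poly_mapping_eqI) (simp add: lookup_pscale lookup_single when_def)

lemma lookup_sum_single:
  "finite S \<Longrightarrow> Poly_Mapping.lookup (\<Sum>a\<in>S. Poly_Mapping.single a (u a)) m = (if m \<in> S then u m else 0)"
  by (simp add: lookup_sum lookup_single when_def sum.delta')

lemma sum_single_lookup:
  "finite S \<Longrightarrow> Poly_Mapping.keys p \<subseteq> S \<Longrightarrow> (\<Sum>a\<in>S. Poly_Mapping.single a (Poly_Mapping.lookup p a)) = p"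
  by (rule poly_mapping_eqI) (auto simp: lookup_sum_single in_keys_iff)

definition riesz :: "(('v \<Rightarrow>\<^sub>0 nat) \<Rightarrow> real) \<Rightarrow> 'v rpoly \<Rightarrow> real" where
  "riesz M p = (\<Sum>m\<in>Poly_Mapping.keys p. Poly_Mapping.lookup p m * M m)"

definition hankel :: "('a::plus \<Rightarrow> 'b) \<Rightarrow> 'a \<Rightarrow> 'a \<Rightarrow> 'b" where
  "hankel M a b = M (a + b)"

lemma riesz_eq_sum:
  "finite S \<Longrightarrow> Poly_Mapping.keys p \<subseteq> S \<Longrightarrow> riesz M p = (\<Sum>m\<in>S. Poly_Mapping.lookup p m * M m)"
  unfolding riesz_def by (rule sum.mono_neutral_left) (auto simp: in_keys_iff)

lemma riesz_add: "riesz M (p + q) = riesz M p + riesz M q"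
  unfolding riesz_def by (rule setsum_keys_plus_distrib[where f = "\<lambda>m c. c * M m"]) (simp_all add: distrib_right)

lemma riesz_pscale: "riesz M (pscale c p) = c * riesz M p"
  by (simp only: riesz_eq_sum[OF finite_keys keys_pscale_subset])
     (simp add: riesz_def lookup_pscale sum_distrib_left mult.assoc)

lemma linear_poly_fun_riesz: "linear_poly_fun (riesz M)"
  by (simp add: linear_poly_fun_def riesz_add riesz_pscale)

lemma riesz_single: "riesz M (Poly_Mapping.single m c) = c * M m"
  by (simp add: riesz_def)

lemma riesz_sum: "riesz M (\<Sum>i\<in>I. f i) = (\<Sum>i\<in>I. riesz M (f i))"
proof -
  have "riesz M 0 = 0" by (simp add: riesz_def)
  then show ?thesis using sum_comp_morphism[of "riesz M" f I] by (simp add: riesz_add o_def)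
qed

lemma riesz_cong:
  "deg_le n p \<Longrightarrow> (\<And>m. mon_deg m \<le> n \<Longrightarrow> M' m = M m) \<Longrightarrow> riesz M' p = riesz M p"
  unfolding riesz_def deg_le_def by (auto intro!: sum.cong)

lemma riesz_square:
  assumes "finite S" "Poly_Mapping.keys p \<subseteq> S"
  shows "riesz M (p * p) = quad_form (hankel M) S (Poly_Mapping.lookup p)"
proof -
  have "p * p = (\<Sum>a\<in>S. Poly_Mapping.single a (Poly_Mapping.lookup p a)) *
      (\<Sum>b\<in>S. Poly_Mapping.single b (Poly_Mapping.lookup p b))"
    by (simp only: sum_single_lookup[OF assms])
  also have "\<dots> = (\<Sum>a\<in>S. \<Sum>b\<in>S.
      Poly_Mapping.single (a + b) (Poly_Mapping.lookup p a * Poly_Mapping.lookup p b))"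
    by (simp add: sum_product mult_single)
  finally show ?thesis
    by (simp add: riesz_sum riesz_single quad_form_def hankel_def)
qed

lemma linear_on_deg_eq_riesz:
  fixes L :: "'v rpoly \<Rightarrow> real"
  assumes "linear_on_deg k L" "deg_le k q"
  shows "L q = riesz (\<lambda>m. L (Poly_Mapping.single m 1)) q"
proof -
  have add: "\<And>p q. deg_le k p \<Longrightarrow> deg_le k q \<Longrightarrow> L (p + q) = L p + L q"
    and scale: "\<And>c p. deg_le k p \<Longrightarrow> L (pscale c p) = c * L p"
    using assms(1) unfolding linear_on_deg_def by auto
  have "L 0 = 0"
  proof -
    have "pscale 0 0 = (0 :: 'v rpoly)"
      by (rule poly_mapping_eqI) (simp add: lookup_pscale)
    then show ?thesis
      using scale[of 0 0] by (simp add: deg_le_def)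
  qed
  have L_sum: "L (\<Sum>i\<in>I. f i) = (\<Sum>i\<in>I. L (f i))" if "\<And>i. i \<in> I \<Longrightarrow> deg_le k (f i)" for I f
    using that
  proof (induction I rule: infinite_finite_induct)
    case (insert i I)
    then have "L (f i + sum f I) = L (f i) + L (sum f I)"
      by (intro add deg_le_sum) auto
    with insert show ?case by simp
  qed (simp_all add: \<open>L 0 = 0\<close>)
  have deg_single: "deg_le k (Poly_Mapping.single m c)" if "m \<in> Poly_Mapping.keys q" for m c
    using assms(2) that unfolding deg_le_def by simp
  have "L q = L (\<Sum>m\<in>Poly_Mapping.keys q. Poly_Mapping.single m (Poly_Mapping.lookup q m))"
    using sum_single_lookup[OF finite_keys subset_refl, of q] by simp
  also have "\<dots> = (\<Sum>m\<in>Poly_Mapping.keys q. L (Poly_Mapping.single m (Poly_Mapping.lookup q m)))"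
    by (rule L_sum) (rule deg_single)
  also have "\<dots> = (\<Sum>m\<in>Poly_Mapping.keys q. Poly_Mapping.lookup q m * L (Poly_Mapping.single m 1))"
  proof (rule sum.cong)
    fix m assume "m \<in> Poly_Mapping.keys q"
    from scale[OF deg_single[OF this, of 1]]
    show "L (Poly_Mapping.single m (Poly_Mapping.lookup q m)) = Poly_Mapping.lookup q m * L (Poly_Mapping.single m 1)"
      unfolding pscale_single .
  qed simp
  finally show ?thesis by (simp add: riesz_def)
qed

lemma pos_def_on_hankel_iff:
  fixes M :: "('v::finite \<Rightarrow>\<^sub>0 nat) \<Rightarrow> real"
  shows "pos_def_on (hankel M) (mons_le K) \<longleftrightarrow> (\<forall>p. deg_le K p \<longrightarrow> p \<noteq> 0 \<longrightarrow> riesz M (p * p) > 0)"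
proof
  assume pd: "pos_def_on (hankel M) (mons_le K)"
  show "\<forall>p. deg_le K p \<longrightarrow> p \<noteq> 0 \<longrightarrow> riesz M (p * p) > 0"
  proof (intro allI impI)
    fix p :: "'v rpoly"
    assume "deg_le K p" "p \<noteq> 0"
    then have keys: "Poly_Mapping.keys p \<subseteq> mons_le K"
      by (simp add: deg_le_iff_keys_subset)
    obtain m where "Poly_Mapping.lookup p m \<noteq> 0"
      using \<open>p \<noteq> 0\<close> by (metis lookup_zero poly_mapping_eqI)
    moreover from this keys have "m \<in> mons_le K"
      by (auto simp: in_keys_iff)
    ultimately have "quad_form (hankel M) (mons_le K) (Poly_Mapping.lookup p) > 0"
      using pd unfolding pos_def_on_def by blast
    then show "riesz M (p * p) > 0"
      by (simp add: riesz_square[OF finite_mons_le keys])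
  qed
next
  assume pos: "\<forall>p. deg_le K p \<longrightarrow> p \<noteq> 0 \<longrightarrow> riesz M (p * p) > 0"
  show "pos_def_on (hankel M) (mons_le K)"
    unfolding pos_def_on_def
  proof (intro allI impI)
    fix u :: "('v \<Rightarrow>\<^sub>0 nat) \<Rightarrow> real"
    assume "\<exists>a\<in>mons_le K. u a \<noteq> 0"
    define p :: "'v rpoly" where "p = (\<Sum>a\<in>mons_le K. Poly_Mapping.single a (u a))"
    have lookup_p: "Poly_Mapping.lookup p a = (if a \<in> mons_le K then u a else 0)" for a
      unfolding p_def by (rule lookup_sum_single[OF finite_mons_le])
    have keys: "Poly_Mapping.keys p \<subseteq> mons_le K"
      by (auto simp: in_keys_iff lookup_p split: if_splits)
    obtain a where "a \<in> mons_le K" "u a \<noteq> 0"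
      using \<open>\<exists>a\<in>mons_le K. u a \<noteq> 0\<close> by blast
    then have "p \<noteq> 0"
      using lookup_p[of a] by auto
    then have "riesz M (p * p) > 0"
      using pos keys by (simp add: deg_le_iff_keys_subset)
    moreover have "quad_form (hankel M) (mons_le K) (Poly_Mapping.lookup p) = quad_form (hankel M) (mons_le K) u"
      by (rule quad_form_cong) (simp_all add: lookup_p)
    moreover have "riesz M (p * p) = quad_form (hankel M) (mons_le K) (Poly_Mapping.lookup p)"
      by (rule riesz_square[OF finite_mons_le keys])
    ultimately show "quad_form (hankel M) (mons_le K) u > 0" by simp
  qed
qed

lemma pos_def_on_hankel_cong:
  assumes "\<And>m. mon_deg m \<le> 2 * K \<Longrightarrow> M' m = M m"
  shows "pos_def_on (hankel M') (mons_le K) \<longleftrightarrow> pos_def_on (hankel M) (mons_le K)"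
proof -
  have "quad_form (hankel M') (mons_le K) u = quad_form (hankel M) (mons_le K) u" for u
    by (rule quad_form_cong) (simp_all add: hankel_def mons_le_def mon_deg_add assms)
  then show ?thesis by (simp add: pos_def_on_def)
qed

section \<open>Extending positive definite Hankel forms\<close>

definition mon_sqnorm :: "('v::finite \<Rightarrow>\<^sub>0 nat) \<Rightarrow> nat" where
  "mon_sqnorm m = (\<Sum>i\<in>UNIV. (Poly_Mapping.lookup m i)\<^sup>2)"

lemma mon_sqnorm_double: "mon_sqnorm (b + b) = 4 * mon_sqnorm b"
  by (simp add: mon_sqnorm_def lookup_add sum_distrib_left power_mult_distrib flip: mult_2)

lemma mon_sqnorm_pos:
  assumes "b \<noteq> 0"
  shows "mon_sqnorm b > 0"
proof -
  from assms have "Poly_Mapping.lookup b \<noteq> Poly_Mapping.lookup 0"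
    by (simp add: lookup_inject)
  then obtain i where "Poly_Mapping.lookup b i \<noteq> 0"
    by (metis ext lookup_zero)
  then have "0 < (Poly_Mapping.lookup b i)\<^sup>2"
    by simp
  also have "\<dots> \<le> mon_sqnorm b"
    unfolding mon_sqnorm_def by (rule member_le_sum) simp_all
  finally show ?thesis .
qed

lemma sq_add_le: "(x + y)\<^sup>2 \<le> 2 * x\<^sup>2 + 2 * (y :: nat)\<^sup>2"
  and sq_add_less: "x \<noteq> y \<Longrightarrow> (x + y)\<^sup>2 < 2 * x\<^sup>2 + 2 * (y :: nat)\<^sup>2"
proof -
  have "int ((x + y)\<^sup>2) + (int x - int y)\<^sup>2 = int (2 * x\<^sup>2 + 2 * y\<^sup>2)"
    by (simp add: power2_eq_square algebra_simps)
  moreover have "x \<noteq> y \<Longrightarrow> (int x - int y)\<^sup>2 > 0"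
    by simp
  ultimately show "(x + y)\<^sup>2 \<le> 2 * x\<^sup>2 + 2 * y\<^sup>2" "x \<noteq> y \<Longrightarrow> (x + y)\<^sup>2 < 2 * x\<^sup>2 + 2 * y\<^sup>2"
    by (smt (verit) of_nat_le_iff of_nat_less_iff zero_le_power2)+
qed

lemma mon_sqnorm_add_less:
  assumes "b \<noteq> c"
  shows "mon_sqnorm (b + c) < 2 * mon_sqnorm b + 2 * mon_sqnorm c"
proof -
  from assms have "Poly_Mapping.lookup b \<noteq> Poly_Mapping.lookup c"
    by (simp add: lookup_inject)
  then obtain i where "Poly_Mapping.lookup b i \<noteq> Poly_Mapping.lookup c i"
    by (meson ext)
  then show ?thesis
    unfolding mon_sqnorm_def sum_distrib_left sum.distrib[symmetric] lookup_add
    by (intro sum_strict_mono_ex1[of UNIV _ _]) (simp_all add: sq_add_le sq_add_less exI[of _ i])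
qed

lemma quad_form_exp_mon_sqnorm:
  fixes C :: "('v::finite \<Rightarrow>\<^sub>0 nat) set" and \<sigma> :: real
  assumes "finite C" "0 \<notin> C" "1 \<le> \<sigma>" "2 * card C \<le> \<sigma>"
  shows "\<sigma> / 2 * sumsq C u \<le> quad_form (\<lambda>b c. \<sigma> ^ mon_sqnorm (b + c)) C u"
proof (rule quad_form_diag_dominant[where w = "\<lambda>b. \<sigma> ^ (2 * mon_sqnorm b)"])
  show "\<sigma> ^ mon_sqnorm (b + b) = (\<sigma> ^ (2 * mon_sqnorm b))\<^sup>2" for b
    by (simp add: mon_sqnorm_double flip: power_mult)
  show "\<sigma> \<le> (\<sigma> ^ (2 * mon_sqnorm b))\<^sup>2" if "b \<in> C" for b
  proof -
    have "0 < mon_sqnorm b"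
      by (rule mon_sqnorm_pos) (use that assms(2) in blast)
    then have "\<sigma> ^ 1 \<le> \<sigma> ^ (2 * mon_sqnorm b * 2)"
      by (intro power_increasing assms(3)) simp
    then show ?thesis
      unfolding power_mult[of \<sigma> "2 * mon_sqnorm b" 2] by simp
  qed
  show "\<bar>\<sigma> ^ mon_sqnorm (b + c)\<bar> \<le> \<bar>\<sigma> ^ (2 * mon_sqnorm b) * \<sigma> ^ (2 * mon_sqnorm c)\<bar> / \<sigma>"
    if "b \<noteq> c" for b c
  proof -
    have "\<sigma> ^ Suc (mon_sqnorm (b + c)) \<le> \<sigma> ^ (2 * mon_sqnorm b + 2 * mon_sqnorm c)"
      using mon_sqnorm_add_less[OF that] by (intro power_increasing assms(3)) simp
    then have "\<sigma> * \<sigma> ^ mon_sqnorm (b + c) \<le> \<sigma> ^ (2 * mon_sqnorm b) * \<sigma> ^ (2 * mon_sqnorm c)"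
      by (simp only: power_Suc power_add)
    then show ?thesis
      using assms(3) by (simp add: pos_le_divide_eq mult.commute)
  qed
qed (use assms in simp_all)

lemma quad_form_hankel_top_block:
  fixes M :: "('v::finite \<Rightarrow>\<^sub>0 nat) \<Rightarrow> real" and \<sigma> :: real and K :: nat
  defines "C \<equiv> {m :: 'v \<Rightarrow>\<^sub>0 nat. mon_deg m = Suc K}"
  assumes "1 \<le> \<sigma>" "2 * card C \<le> \<sigma>"
    and "\<And>m. 2 * K + 1 < mon_deg m \<Longrightarrow> M m = \<sigma> ^ mon_sqnorm m"
  shows "\<sigma> / 2 * sumsq C u \<le> quad_form (hankel M) C u"
proof -
  have "finite C"
    by (rule finite_subset[OF _ finite_mons_le[of "Suc K"]]) (auto simp: C_def mons_le_def)
  moreover have "0 \<notin> C"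
    by (simp add: C_def mon_deg_zero)
  moreover have "quad_form (hankel M) C u = quad_form (\<lambda>b c. \<sigma> ^ mon_sqnorm (b + c)) C u"
    by (rule quad_form_cong) (simp_all add: C_def hankel_def mon_deg_add assms(4))
  ultimately show ?thesis
    using quad_form_exp_mon_sqnorm assms(2,3) by metis
qed

lemma pos_def_on_hankel_extend:
  fixes M :: "('v::finite \<Rightarrow>\<^sub>0 nat) \<Rightarrow> real"
  assumes "pos_def_on (hankel M) (mons_le K)"
  shows "\<exists>M'. (\<forall>m. mon_deg m \<le> 2 * K \<longrightarrow> M' m = M m) \<and> pos_def_on (hankel M') (mons_le (Suc K))"
proof -
  define A where "A = (mons_le K :: ('v \<Rightarrow>\<^sub>0 nat) set)"
  define C where "C = {m :: 'v \<Rightarrow>\<^sub>0 nat. mon_deg m = Suc K}"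
  have "A \<inter> C = {}" "A \<union> C = mons_le (Suc K)"
    by (auto simp: A_def C_def mons_le_def)
  then have "finite A" "finite (A \<union> C)"
    by (simp_all add: A_def finite_mons_le)
  obtain \<alpha> where "\<alpha> > 0" and coercive_A: "\<And>u. \<alpha> * sumsq A u \<le> quad_form (hankel M) A u"
    using pos_def_on_imp_coercive[OF \<open>finite A\<close> _ assms[folded A_def]]
    by (auto simp: hankel_def add.commute)
  define B where "B = (\<Sum>a\<in>A. \<Sum>c\<in>C. \<bar>M (a + c)\<bar>)"
  define \<tau> where "\<tau> = 2 * (B + 1) * B / \<alpha> + \<alpha> / 2"
  define \<sigma> where "\<sigma> = 2 * real (card C) + 2 * \<tau> + 1"
  have "B \<ge> 0" by (simp add: B_def sum_nonneg)
  then have "\<tau> \<ge> 0" using \<open>\<alpha> > 0\<close> by (simp add: \<tau>_def)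
  then have "1 \<le> \<sigma>" "2 * card C \<le> \<sigma>" "\<tau> \<le> \<sigma> / 2" by (simp_all add: \<sigma>_def)
  \<comment> \<open>Keeping the moments of degree \<open>2K + 1\<close> makes the mixed block independent of \<open>\<sigma>\<close>.\<close>
  define M' where "M' m = (if mon_deg m \<le> 2 * K + 1 then M m else \<sigma> ^ mon_sqnorm m)" for m
  have "\<alpha> * sumsq A u \<le> quad_form (hankel M') A u" for u
  proof -
    have "quad_form (hankel M') A u = quad_form (hankel M) A u"
      by (rule quad_form_cong) (simp_all add: A_def mons_le_def hankel_def M'_def mon_deg_add)
    then show ?thesis using coercive_A[of u] by simp
  qed
  moreover have "\<tau> * sumsq C u \<le> quad_form (hankel M') C u" for u
  proof -
    have "\<sigma> / 2 * sumsq C u \<le> quad_form (hankel M') C u"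
      unfolding C_def by (rule quad_form_hankel_top_block)
        (use \<open>1 \<le> \<sigma>\<close> \<open>2 * card C \<le> \<sigma>\<close> in \<open>simp_all add: C_def M'_def\<close>)
    moreover have "\<tau> * sumsq C u \<le> \<sigma> / 2 * sumsq C u"
      using \<open>\<tau> \<le> \<sigma> / 2\<close> by (rule mult_right_mono[OF _ sumsq_nonneg])
    ultimately show ?thesis by linarith
  qed
  moreover have "B = (\<Sum>a\<in>A. \<Sum>c\<in>C. \<bar>hankel M' a c\<bar>)"
    unfolding B_def
    by (intro sum.cong refl) (simp add: A_def C_def mons_le_def hankel_def M'_def mon_deg_add)
  ultimately have "\<alpha> / 2 * sumsq (A \<union> C) u \<le> quad_form (hankel M') (A \<union> C) u" for u
    using coercive_union[where P = "hankel M'", of A C \<alpha> \<tau>] \<open>finite (A \<union> C)\<close> \<open>A \<inter> C = {}\<close>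
      \<open>\<alpha> > 0\<close> by (simp add: \<tau>_def hankel_def add.commute)
  then have "pos_def_on (hankel M') (mons_le (Suc K))"
    using coercive_imp_pos_def_on[of "A \<union> C" "\<alpha> / 2"] \<open>finite (A \<union> C)\<close> \<open>\<alpha> > 0\<close>
      \<open>A \<union> C = mons_le (Suc K)\<close> by simp
  moreover have "\<forall>m. mon_deg m \<le> 2 * K \<longrightarrow> M' m = M m"
    by (simp add: M'_def)
  ultimately show ?thesis by blast
qed

lemma pos_def_on_hankel_extend_all:
  fixes M0 :: "('v::finite \<Rightarrow>\<^sub>0 nat) \<Rightarrow> real"
  assumes "pos_def_on (hankel M0) (mons_le d)"
  obtains M where "\<And>m. mon_deg m \<le> 2 * d \<Longrightarrow> M m = M0 m"
    and "\<And>k. pos_def_on (hankel M) (mons_le (d + k))"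
proof -
  define extend where
    "extend K M = (SOME M'. (\<forall>m. mon_deg m \<le> 2 * K \<longrightarrow> M' m = M m) \<and> pos_def_on (hankel M') (mons_le (Suc K)))"
    for K and M :: "('v \<Rightarrow>\<^sub>0 nat) \<Rightarrow> real"
  have extend: "(\<forall>m. mon_deg m \<le> 2 * K \<longrightarrow> extend K M m = M m) \<and>
      pos_def_on (hankel (extend K M)) (mons_le (Suc K))"
    if "pos_def_on (hankel M) (mons_le K)" for K M
    unfolding extend_def by (rule someI_ex[OF pos_def_on_hankel_extend[OF that]])
  define Ms where "Ms k = rec_nat M0 (\<lambda>k M. extend (d + k) M) k" for k
  have Ms_0: "Ms 0 = M0" and Ms_Suc: "Ms (Suc k) = extend (d + k) (Ms k)" for k
    by (simp_all add: Ms_def)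
  have pd: "pos_def_on (hankel (Ms k)) (mons_le (d + k))" for k
    by (induction k) (simp_all add: Ms_0 Ms_Suc assms extend)
  have stable: "Ms j m = Ms k m" if "k \<le> j" "mon_deg m \<le> 2 * (d + k)" for j k m
    using that(1)
  proof (induction j rule: dec_induct)
    case (step j)
    then have "mon_deg m \<le> 2 * (d + j)" using that(2) by simp
    then show ?case using extend[OF pd[of j]] step.IH by (simp add: Ms_Suc)
  qed simp
  \<comment> \<open>the moment of \<open>m\<close> is frozen from stage \<open>mon_deg m\<close> on\<close>
  define M where "M m = Ms (mon_deg m) m" for m
  have M_eq: "M m = Ms k m" if "mon_deg m \<le> 2 * (d + k)" for m k
  proof (cases "mon_deg m \<le> k")
    case True
    then show ?thesis using stable[of "mon_deg m" k m] by (simp add: M_def)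
  next
    case False
    then show ?thesis using stable[of k "mon_deg m" m] that by (simp add: M_def)
  qed
  show ?thesis
  proof
    show "M m = M0 m" if "mon_deg m \<le> 2 * d" for m
      using M_eq[of m 0] that by (simp add: Ms_0)
    show "pos_def_on (hankel M) (mons_le (d + k))" for k
      using pos_def_on_hankel_cong[of "d + k" M "Ms k"] M_eq pd by simp
  qed
qed

lemma pos_def_on_hankel_moments:
  fixes L :: "'v::finite rpoly \<Rightarrow> real"
  assumes "linear_on_deg (2 * d) L" "\<And>p. deg_le d p \<Longrightarrow> p \<noteq> 0 \<Longrightarrow> L (p * p) > 0"
  shows "pos_def_on (hankel (\<lambda>m. L (Poly_Mapping.single m 1))) (mons_le d)"
  unfolding pos_def_on_hankel_iff
proof (intro allI impI)
  fix p :: "'v rpoly"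
  assume "deg_le d p" "p \<noteq> 0"
  moreover from \<open>deg_le d p\<close> have "deg_le (2 * d) (p * p)"
    using deg_le_mult[of d p d p] by (simp add: mult_2)
  ultimately show "riesz (\<lambda>m. L (Poly_Mapping.single m 1)) (p * p) > 0"
    using assms linear_on_deg_eq_riesz by metis
qed

theorem lemma3p4:
  fixes d :: nat and L :: "('v::finite) rpoly \<Rightarrow> real"
  assumes "linear_on_deg (2 * d) L"
    and "\<And>p. deg_le d p \<Longrightarrow> p \<noteq> 0 \<Longrightarrow> L (p * p) > 0"
  shows "\<exists>L'. linear_poly_fun L' \<and> (\<forall>p. deg_le (2 * d) p \<longrightarrow> L' p = L p) \<and>
              (\<forall>p. p \<noteq> 0 \<longrightarrow> L' (p * p) > 0)"
proof -
  define M0 where "M0 m = L (Poly_Mapping.single m 1)" for m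
  have "pos_def_on (hankel M0) (mons_le d)"
    unfolding M0_def using assms by (rule pos_def_on_hankel_moments)
  then obtain M where agree: "\<And>m. mon_deg m \<le> 2 * d \<Longrightarrow> M m = M0 m"
    and pd: "\<And>k. pos_def_on (hankel M) (mons_le (d + k))"
    using pos_def_on_hankel_extend_all by metis
  have "riesz M p = L p" if "deg_le (2 * d) p" for p
    using riesz_cong[OF that agree] linear_on_deg_eq_riesz[OF assms(1) that] by (simp add: M0_def)
  moreover have "riesz M (p * p) > 0" if "p \<noteq> 0" for p
  proof -
    obtain k where "deg_le k p"
      using deg_le_exists by blast
    then have "deg_le (d + k) p"
      by (rule deg_le_mono) simp
    with \<open>p \<noteq> 0\<close> pd[of k] show ?thesis
      by (simp add: pos_def_on_hankel_iff)
  qed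
  ultimately show ?thesis
    using linear_poly_fun_riesz[of M] by auto
qed

end
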